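(* Let $k\ge 2$ and $m$ be positive integers, and let \[ p_m(x) = x^k - m x^{k-1} - x^{k-2} - \dots - x - 1 . \] Then $p_m(x)$ has a unique positive real root $\varrho_m$, and it satisfies $m<\varrho_m<m+1$. Moreover, every complex root $\gamma\neq\varrho_m$ of $p_m(x)$ satisfies $|\gamma|<\varrho_m$.
   Context: For $k=2$ the polynomial is $p_m(x)=x^2-mx-1$. *)

theory Defs
  imports "HOL-Analysis.Analysis"
begin

definition pm :: "nat \<Rightarrow> nat \<Rightarrow> 'a::field \<Rightarrow> 'a" where
  "pm k m x = x ^ k - of_nat m * x ^ (k - 1) - (\<Sum>i<k - 1. x ^ i)"

end

theory Submission imports Defs begin

text \<open>Dividing by \<open>x\<^sup>k\<close>, a nonzero root of \<open>p\<^sub>m\<close> is a solution of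
  \<open>m/x + 1/x\<^sup>2 + \<dots> + 1/x\<^sup>k = 1\<close>. On the positive reals the left-hand side is strictly
  decreasing, which gives uniqueness of the positive root \<open>\<rho>\<close>; its existence in \<open>(m, m+1)\<close>
  follows from the signs \<open>p\<^sub>m(m) < 0 < p\<^sub>m(m+1)\<close>. For a complex root \<open>\<gamma>\<close>, taking real
  parts and the triangle inequality bound the left-hand side at \<open>\<gamma>\<close> by its value at \<open>|\<gamma>|\<close>,
  strictly unless \<open>\<gamma>\<close> is a nonnegative real; monotonicity then forces \<open>|\<gamma>| < \<rho>\<close>.\<close>

definition pm_recip :: "nat \<Rightarrow> nat \<Rightarrow> 'a::field \<Rightarrow> 'a" where
  "pm_recip k m x = of_nat m / x + (\<Sum>i<k - 1. 1 / x ^ (k - i))"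

lemma pm_eq_power_mult_pm_recip:
  fixes x :: "'a::field"
  assumes "x \<noteq> 0" "k \<ge> 1"
  shows "pm k m x = x ^ k * (1 - pm_recip k m x)"
proof -
  have lead: "x ^ k * (of_nat m / x) = of_nat m * x ^ (k - 1)"
    using assms by (cases k) (auto simp: field_simps)
  have tail: "x ^ k * (1 / x ^ (k - i)) = x ^ i" if "i < k - 1" for i
  proof -
    have "x ^ k = x ^ (k - i) * x ^ i" using that by (simp flip: power_add)
    then show ?thesis using assms by simp
  qed
  have "x ^ k * (1 - pm_recip k m x) =
      x ^ k - x ^ k * (of_nat m / x) - (\<Sum>i<k - 1. x ^ k * (1 / x ^ (k - i)))"
    unfolding pm_recip_def by (simp add: algebra_simps sum_distrib_left)
  also have "\<dots> = pm k m x"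
    unfolding pm_def lead using tail by simp
  finally show ?thesis by simp
qed

lemma pm_eq_0_iff_pm_recip_eq_1:
  fixes x :: "'a::field"
  assumes "x \<noteq> 0" "k \<ge> 1"
  shows "pm k m x = 0 \<longleftrightarrow> pm_recip k m x = 1"
  using pm_eq_power_mult_pm_recip[OF assms] assms(1) by simp

lemma pm_of_real: "pm k m (of_real x :: 'a::real_field) = of_real (pm k m x)"
  unfolding pm_def by simp

lemma pm_recip_strict_antimono:
  fixes x y :: real
  assumes "0 < x" "x < y" "m \<ge> 1"
  shows "pm_recip k m y < pm_recip k m x"
proof -
  have "real m / y < real m / x"
    using assms by (simp add: frac_less2)
  moreover have "(\<Sum>i<k - 1. 1 / y ^ (k - i)) \<le> (\<Sum>i<k - 1. 1 / x ^ (k - i))"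
    by (rule sum_mono) (use assms in \<open>auto intro!: divide_left_mono power_mono mult_pos_pos\<close>)
  ultimately show ?thesis
    unfolding pm_recip_def by simp
qed

lemma pm_pos_root_unique:
  fixes x y :: real
  assumes "m \<ge> 1" "k \<ge> 1" "x > 0" "y > 0" "pm k m x = 0" "pm k m y = 0"
  shows "x = y"
proof -
  have "pm_recip k m x = pm_recip k m y"
    using assms pm_eq_0_iff_pm_recip_eq_1[of x k m] pm_eq_0_iff_pm_recip_eq_1[of y k m] by simp
  then show ?thesis
    using pm_recip_strict_antimono[of x y m k] pm_recip_strict_antimono[of y x m k] assms
    by (metis less_irrefl linorder_neqE_linordered_idom)
qed

lemma sum_power_less_power:
  fixes x :: "'a::linordered_idom"
  assumes "x \<ge> 2"
  shows "(\<Sum>i<n. x ^ i) < x ^ n"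
proof (induction n)
  case 0
  show ?case by simp
next
  case (Suc n)
  have "(\<Sum>i<Suc n. x ^ i) < 2 * x ^ n"
    using Suc by simp
  also have "\<dots> \<le> x ^ Suc n"
    using assms by (simp add: mult_right_mono)
  finally show ?case .
qed

lemma pm_zero:
  assumes "k \<ge> 2"
  shows "pm k m (0 :: 'a::field) = -1"
  using assms by (simp add: pm_def power_0_left sum.delta)

lemma pm_of_nat_neg:
  assumes "k \<ge> 2"
  shows "pm k m (of_nat m :: 'a::linordered_field) < 0"
proof -
  have "(1 :: 'a) \<le> (\<Sum>i<k - 1. of_nat m ^ i)"
    using sum_mono2[of "{..<k - 1}" "{0}" "\<lambda>i. (of_nat m :: 'a) ^ i"] assms by force
  then show ?thesis
    using assms by (cases k) (auto simp: pm_def)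
qed

lemma pm_Suc_pos:
  assumes "k \<ge> 1" "m \<ge> 1"
  shows "pm k m (of_nat m + 1 :: 'a::linordered_field) > 0"
proof -
  let ?x = "of_nat m + 1 :: 'a"
  have "pm k m ?x = ?x ^ (k - 1) - (\<Sum>i<k - 1. ?x ^ i)"
    using assms(1) by (cases k) (auto simp: pm_def algebra_simps)
  moreover have "(\<Sum>i<k - 1. ?x ^ i) < ?x ^ (k - 1)"
    using assms(2) by (intro sum_power_less_power) simp
  ultimately show ?thesis by simp
qed

lemma pm_root_between:
  assumes "k \<ge> 2" "m \<ge> 1"
  obtains \<rho> :: real where "real m < \<rho>" "\<rho> < real m + 1" "pm k m \<rho> = 0"
proof -
  have neg: "pm k m (real m) < 0" and pos: "pm k m (real m + 1) > 0"
    using pm_of_nat_neg[of k m, where 'a = real] pm_Suc_pos[of k m, where 'a = real] assms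
    by auto
  have "continuous_on {real m..real m + 1} (pm k m)"
    unfolding pm_def by (intro continuous_intros)
  then obtain \<rho> where "real m \<le> \<rho>" "\<rho> \<le> real m + 1" "pm k m \<rho> = 0"
    using IVT'[of "pm k m" "real m" 0 "real m + 1"] neg pos by force
  with neg pos show ?thesis
    using that by (metis order_less_irrefl order_le_less)
qed

lemma Re_pm_recip_less:
  fixes z :: complex
  assumes "m \<ge> 1" "z \<notin> \<real>\<^sub>\<ge>\<^sub>0"
  shows "Re (pm_recip k m z) < pm_recip k m (cmod z)"
proof -
  have "inverse z \<notin> \<real>\<^sub>\<ge>\<^sub>0"
  proof
    assume "inverse z \<in> \<real>\<^sub>\<ge>\<^sub>0"
    then obtain r where "inverse z = complex_of_real r" "r \<ge> 0"
      by (auto simp: nonneg_Reals_def)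
    then have "z = complex_of_real (inverse r)"
      by (metis inverse_inverse_eq of_real_inverse)
    with \<open>r \<ge> 0\<close> assms(2) show False
      by (metis inverse_nonnegative_iff_nonnegative nonneg_Reals_of_real_iff)
  qed
  then have "Re (inverse z) < cmod (inverse z)"
    using complex_Re_le_cmod[of "inverse z"] norm_eq_Re_iff[of "inverse z"] by linarith
  then have lead: "Re (of_nat m / z) < real m / cmod z"
    using assms(1) by (simp add: divide_inverse norm_inverse)
  have "Re (1 / z ^ (k - i)) \<le> 1 / cmod z ^ (k - i)" for i
    using complex_Re_le_cmod[of "1 / z ^ (k - i)"] by (simp add: norm_divide norm_power)
  then have "Re (\<Sum>i<k - 1. 1 / z ^ (k - i)) \<le> (\<Sum>i<k - 1. 1 / cmod z ^ (k - i))"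
    unfolding Re_sum by (rule sum_mono)
  with lead show ?thesis
    unfolding pm_recip_def by simp
qed

lemma pm_complex_root_norm_less:
  fixes \<rho> :: real and \<gamma> :: complex
  assumes "k \<ge> 2" "m \<ge> 1" "\<rho> > 0" "pm k m \<rho> = 0"
    and "pm k m \<gamma> = 0" "\<gamma> \<noteq> complex_of_real \<rho>"
  shows "cmod \<gamma> < \<rho>"
proof -
  have "\<gamma> \<noteq> 0"
    using assms(1,5) pm_zero[of k m, where 'a = complex] by auto
  have "\<gamma> \<notin> \<real>\<^sub>\<ge>\<^sub>0"
  proof
    assume "\<gamma> \<in> \<real>\<^sub>\<ge>\<^sub>0"
    then obtain x where x: "\<gamma> = complex_of_real x" "x \<ge> 0"
      by (auto simp: nonneg_Reals_def)
    then have "x > 0" "pm k m x = 0"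
      using \<open>\<gamma> \<noteq> 0\<close> assms(5) pm_of_real[of k m x, where 'a = complex] by auto
    then have "x = \<rho>"
      using pm_pos_root_unique[of m k x \<rho>] assms by simp
    with x assms(6) show False by simp
  qed
  have "pm_recip k m \<rho> = 1"
    using assms pm_eq_0_iff_pm_recip_eq_1[of \<rho> k m] by simp
  also have "1 = Re (pm_recip k m \<gamma>)"
    using assms \<open>\<gamma> \<noteq> 0\<close> pm_eq_0_iff_pm_recip_eq_1[of \<gamma> k m] by simp
  also have "\<dots> < pm_recip k m (cmod \<gamma>)"
    using Re_pm_recip_less[OF assms(2) \<open>\<gamma> \<notin> \<real>\<^sub>\<ge>\<^sub>0\<close>] .
  finally show ?thesis
    using pm_recip_strict_antimono[of \<rho> "cmod \<gamma>" m k] assms(2,3) by (metis not_less_iff_gr_or_eq)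
qed

theorem mainTheorem1:
  fixes k m :: nat
  assumes "k \<ge> 2" and "m \<ge> 1"
  shows "(\<exists>!\<rho>::real. \<rho> > 0 \<and> pm k m \<rho> = 0) \<and>
         (\<forall>\<rho>::real. \<rho> > 0 \<and> pm k m \<rho> = 0 \<longrightarrow>
           real m < \<rho> \<and> \<rho> < real m + 1 \<and>
           (\<forall>\<gamma>::complex. pm k m \<gamma> = 0 \<and> \<gamma> \<noteq> complex_of_real \<rho> \<longrightarrow> cmod \<gamma> < \<rho>))"
proof -
  obtain r :: real where r: "real m < r" "r < real m + 1" "pm k m r = 0"
    using pm_root_between assms by blast
  have "r > 0"
    using r(1) by linarith
  have unique: "\<rho> = r" if "\<rho> > 0" "pm k m \<rho> = 0" for \<rho> :: real
    using pm_pos_root_unique[of m k \<rho> r] that assms \<open>r > 0\<close> r(3) by simp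
  show ?thesis
    using \<open>r > 0\<close> r unique pm_complex_root_norm_less[OF assms] by blast
qed

end
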